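(* Let $V(r)=r\coth r-\log|2\sinh r|$ for $r>0$ and $V_{\mathrm{eff}}(x):=\sum_{k=1}^\infty V(kx)$ for $x>0$. For every $C>0$ there exists $\alpha_0>0$ such that for every $x>0$: if $\sup_{\alpha>\alpha_0}\big[C\,V_{\mathrm{eff}}(\alpha/C)-V(\alpha x)\big]>0$, then $x\ge\frac1{4C}$. *)

theory Defs
  imports "HOL-Analysis.Analysis"
begin

definition coth :: "real \<Rightarrow> real" where
  "coth r = cosh r / sinh r"

definition V :: "real \<Rightarrow> real" where
  "V r = r * coth r - ln \<bar>2 * sinh r\<bar>"

definition V_eff :: "real \<Rightarrow> real" where
  "V_eff x = (\<Sum>k. V (real (Suc k) * x))"

end

theory Submission
  imports Defs
begin

text \<open>With \<open>t = exp (-2r)\<close> one has \<open>V r = 2rt/(1-t) - ln (1-t)\<close>, so \<open>V r\<close> lies between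
  \<open>exp (-2r)\<close> and, for large \<open>r\<close>, \<open>exp (-3r/2)\<close>. Hence \<open>C V_eff (\<alpha>/C) \<le> 2C exp (-3\<alpha>/(2C))\<close>,
  which for large \<open>\<alpha>\<close> is below \<open>exp (-\<alpha>/(2C))\<close>, whereas \<open>V (\<alpha> x) \<ge> exp (-2\<alpha>x)\<close>. When
  \<open>x < 1/(4C)\<close> the latter wins for every large \<open>\<alpha>\<close>, so the supremum is not positive.\<close>

lemma V_exp_form:
  fixes r :: real
  assumes "r > 0"
  shows "V r = 2 * r * exp (-2*r) / (1 - exp (-2*r)) - ln (1 - exp (-2*r))"
proof -
  define t where "t = exp (-2*r)"
  have t1: "t < 1" unfolding t_def using assms by simp
  have exp_double: "exp (-2*r) = exp (-r) * exp (-r)" by (simp flip: exp_add)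
  have sinh: "2 * sinh r = exp r * (1 - t)"
    unfolding t_def exp_double by (simp add: sinh_def exp_minus field_simps)
  have cosh: "2 * cosh r = exp r * (1 + t)"
    unfolding t_def exp_double by (simp add: cosh_def exp_minus field_simps)
  have coth: "coth r = (1 + t) / (1 - t)"
  proof -
    have "coth r = (2 * cosh r) / (2 * sinh r)" by (simp add: coth_def)
    also have "\<dots> = (1 + t) / (1 - t)" by (simp only: sinh cosh) simp
    finally show ?thesis .
  qed
  have "ln \<bar>2 * sinh r\<bar> = r + ln (1 - t)"
    using sinh t1 by (simp add: ln_mult)
  then have "V r = r * (1 + t) / (1 - t) - r - ln (1 - t)"
    unfolding V_def coth by simp
  also have "\<dots> = 2 * r * t / (1 - t) - ln (1 - t)"
    using t1 by (simp add: field_simps)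
  finally show ?thesis unfolding t_def .
qed

lemma V_ge_exp:
  fixes r :: real
  assumes "r > 0"
  shows "exp (-2*r) \<le> V r"
proof -
  define t where "t = exp (-2*r)"
  have t: "0 < t" "t < 1" unfolding t_def using assms by auto
  have "ln (1 - t) \<le> - t" using ln_le_minus_one[of "1 - t"] t by simp
  moreover have "0 \<le> 2 * r * t / (1 - t)" using t assms by simp
  ultimately show ?thesis using V_exp_form[OF assms] unfolding t_def by linarith
qed

lemma V_nonneg: "r > 0 \<Longrightarrow> 0 \<le> V r"
  using V_ge_exp[of r] by (smt (verit) exp_gt_zero)

lemma affine_le_exp_half:
  fixes r :: real
  assumes "r \<ge> 30"
  shows "4 * r + 2 \<le> exp (r/2)"
proof -
  have "30 * r \<le> r * r" using assms by (intro mult_right_mono) auto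
  then have "8 + 28 * r \<le> r * r" using assms by linarith
  then have "4 * r + 2 \<le> 1 + r/2 + (r/2)^2/2" by (simp add: power2_eq_square field_simps)
  also have "\<dots> \<le> exp (r/2)" using exp_lower_Taylor_quadratic[of "r/2"] assms by simp
  finally show ?thesis .
qed

lemma V_le_exp:
  fixes r :: real
  assumes "r \<ge> 30"
  shows "V r \<le> exp (-3/2*r)"
proof -
  define t where "t = exp (-2*r)"
  have t: "0 < t" "t < 1" unfolding t_def using assms by auto
  have "t \<le> 1/2"
  proof -
    have "2 \<le> exp (2*r)" using exp_ge_add_one_self[of "2*r"] assms by linarith
    then show ?thesis unfolding t_def by (simp add: exp_minus field_simps)
  qed
  have "- ln (1 - t) \<le> t / (1 - t)"
    using ln_le_minus_one[of "1/(1 - t)"] t by (simp add: ln_div field_simps)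
  then have "V r \<le> (2 * r + 1) * t / (1 - t)"
    using V_exp_form[of r] assms t unfolding t_def by (simp add: field_simps)
  also have "\<dots> \<le> (2 * r + 1) * t / (1/2)"
    using \<open>t \<le> 1/2\<close> t assms by (intro divide_left_mono) auto
  also have "\<dots> = (4 * r + 2) * t" by simp
  also have "\<dots> \<le> exp (r/2) * t"
    using affine_le_exp_half[OF assms] t by (intro mult_right_mono) auto
  also have "\<dots> = exp (-3/2*r)" unfolding t_def by (simp flip: exp_add)
  finally show ?thesis .
qed

lemma V_eff_le:
  fixes y :: real
  assumes "y \<ge> 30"
  shows "V_eff y \<le> 2 * exp (-3/2*y)"
proof -
  define q where "q = exp (-3/2*y)"
  have "0 < q" unfolding q_def by simp
  have "q \<le> 1/2"
  proof -
    have "2 \<le> exp (3/2*y)" using exp_ge_add_one_self[of "3/2*y"] assms by linarith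
    then show ?thesis unfolding q_def by (simp add: exp_minus field_simps)
  qed
  have term_le: "V (real (Suc k) * y) \<le> q * q^k" for k
  proof -
    have "1 * 30 \<le> real (Suc k) * y" using assms by (intro mult_mono) auto
    then have "V (real (Suc k) * y) \<le> exp (-3/2 * (real (Suc k) * y))"
      by (intro V_le_exp) simp
    also have "\<dots> = exp (real (Suc k) * (-3/2*y))" by (simp add: algebra_simps)
    also have "\<dots> = q * q^k" unfolding exp_of_nat_mult q_def by simp
    finally show ?thesis .
  qed
  have term_nonneg: "0 \<le> V (real (Suc k) * y)" for k
    using assms by (intro V_nonneg) simp
  have geometric: "summable (\<lambda>k. q * q^k)"
    using \<open>0 < q\<close> \<open>q \<le> 1/2\<close> by (intro summable_mult summable_geometric) simp
  have "summable (\<lambda>k. V (real (Suc k) * y))"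
    by (rule summable_comparison_test[OF _ geometric]) (use term_le term_nonneg in auto)
  then have "V_eff y \<le> (\<Sum>k. q * q^k)"
    unfolding V_eff_def using term_le geometric by (intro suminf_le)
  also have "\<dots> = q / (1 - q)"
    using \<open>0 < q\<close> \<open>q \<le> 1/2\<close> by (simp add: suminf_mult suminf_geometric)
  also have "\<dots> \<le> 2 * q" using \<open>0 < q\<close> \<open>q \<le> 1/2\<close> by (simp add: field_simps)
  finally show ?thesis unfolding q_def .
qed

lemma V_eff_scaled_less_V:
  fixes C \<alpha> x :: real
  assumes "C > 0" and "x > 0" and "\<alpha> > C * (30 + 2 * C)" and "x < 1 / (4 * C)"
  shows "C * V_eff (\<alpha> / C) < V (\<alpha> * x)"
proof -
  define y where "y = \<alpha> / C"
  have y: "y > 30 + 2 * C" and \<alpha>: "\<alpha> = C * y"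
    using assms unfolding y_def by (simp_all add: field_simps)
  have "2 * C \<le> exp y" using exp_ge_add_one_self[of y] y by linarith
  have "C * V_eff y \<le> (2 * C) * exp (-y) * exp (-y/2)"
    using V_eff_le[of y] y assms(1) by (simp flip: exp_add)
  also have "\<dots> \<le> exp y * exp (-y) * exp (-y/2)"
    using \<open>2 * C \<le> exp y\<close> by (intro mult_right_mono) auto
  also have "\<dots> = exp (-y/2)" by (simp add: exp_minus)
  also have "\<dots> < exp (-2 * (\<alpha> * x))"
  proof -
    have "y * (4 * C * x) < y * 1"
      using assms y by (intro mult_strict_left_mono) (simp_all add: field_simps)
    then show ?thesis unfolding \<alpha> by (simp add: algebra_simps)
  qed
  also have "\<dots> \<le> V (\<alpha> * x)"
    using assms y \<alpha> by (intro V_ge_exp) simp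
  finally show ?thesis unfolding y_def .
qed

theorem mainTheorem8:
  fixes C :: real
  assumes "C > 0"
  shows "\<exists>\<alpha>0>0. \<forall>x>0.
    (SUP \<alpha>\<in>{\<alpha>0<..}. ereal (C * V_eff (\<alpha> / C) - V (\<alpha> * x))) > 0
    \<longrightarrow> x \<ge> 1 / (4 * C)"
proof (intro exI[of _ "C * (30 + 2 * C)"] conjI allI impI)
  show "C * (30 + 2 * C) > 0" using assms by simp
  fix x :: real
  assume "x > 0"
    and sup_pos: "(SUP \<alpha>\<in>{C * (30 + 2 * C)<..}. ereal (C * V_eff (\<alpha> / C) - V (\<alpha> * x))) > 0"
  show "x \<ge> 1 / (4 * C)"
  proof (rule ccontr)
    assume "\<not> x \<ge> 1 / (4 * C)"
    then have "(SUP \<alpha>\<in>{C * (30 + 2 * C)<..}. ereal (C * V_eff (\<alpha> / C) - V (\<alpha> * x))) \<le> 0"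
      using V_eff_scaled_less_V[OF assms \<open>x > 0\<close>] by (intro SUP_least) force
    with sup_pos show False by simp
  qed
qed

end
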